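(* Consider the setting in the context, with $0<\alpha\le 8$ and $T\ge\max\{40/\alpha+1,40\}K$. For every arm $i\in B$ and every real $\varkappa$, \[ \Pr(\mathcal{M}_{i,\varkappa})\ge 1-\frac{4\cdot2^{1/(8\alpha)}}{2^{1/(8\alpha)}-1}\exp\Big(-\frac{\lambda_i\Delta_i^2}{10}+\frac{\varkappa}{4}\Big). \]
   Context: Arm $i\in[K]$ has reward distribution $\mathcal{D}_i$ on $[0,1]$ with mean $\theta_i$; $\theta\in(0,1)$; $\Delta_i=|\theta_i-\theta|$ (convention $\ln(1/0)=+\infty$). For each $i$, $X_{i,1},X_{i,2},\dots$ are i.i.d. from $\mathcal{D}_i$; $\hat\Delta_{i,t}=|\frac1t\sum_{s\le t}X_{i,s}-\theta|$. $M=\max\{40/\alpha+1,40\}$; $g_i(x)=e^{2x}$ if $x\le\ln\Delta_i^{-1}$, $g_i(x)=\frac{x-\ln\Delta_i^{-1}+\alpha}{\alpha\Delta_i^2}$ otherwise; $\Lambda$ is the unique $x\ge0$ with $\sum_{i=1}^Kg_i(x)=T/M$; $\lambda_i=g_i(\Lambda)$; $B=\{i:\ln\Delta_i^{-1}<\Lambda\}$. The event $\mathcal{M}_{i,\varkappa}$ is: for all integers $t$ with $1\le t\le\lambda_i$, $|\hat\Delta_{i,t}-\Delta_i|\le\sqrt{\big(\lambda_i\Delta_i^2/5-\varkappa/2+\frac{1}{4\alpha}\ln\frac{\lambda_i}{t}\big)/t}$. *)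

theory Defs
  imports "HOL-Probability.Probability"
begin

definition arm_mean :: "(nat \<Rightarrow> real measure) \<Rightarrow> nat \<Rightarrow> real" where
  "arm_mean D i = (\<integral>x. x \<partial>(D i))"

definition gap :: "(nat \<Rightarrow> real measure) \<Rightarrow> real \<Rightarrow> nat \<Rightarrow> real" where
  "gap D \<theta> i = \<bar>arm_mean D i - \<theta>\<bar>"

definition Mconst :: "real \<Rightarrow> real" where
  "Mconst \<alpha> = max (40 / \<alpha> + 1) 40"

text \<open>g_i(x); with the convention ln(1/0) = +infinity, gap 0 means the first branch always.\<close>
definition gfun :: "real \<Rightarrow> (nat \<Rightarrow> real measure) \<Rightarrow> real \<Rightarrow> nat \<Rightarrow> real \<Rightarrow> real" where
  "gfun \<alpha> D \<theta> i x =
     (if gap D \<theta> i = 0 \<or> x \<le> ln (1 / gap D \<theta> i) then exp (2 * x)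
      else (x - ln (1 / gap D \<theta> i) + \<alpha>) / (\<alpha> * (gap D \<theta> i)\<^sup>2))"

definition Lam :: "real \<Rightarrow> (nat \<Rightarrow> real measure) \<Rightarrow> real \<Rightarrow> nat \<Rightarrow> real \<Rightarrow> real" where
  "Lam \<alpha> D \<theta> K T = (THE x. x \<ge> 0 \<and> (\<Sum>i\<in>{1..K}. gfun \<alpha> D \<theta> i x) = T / Mconst \<alpha>)"

definition lam :: "real \<Rightarrow> (nat \<Rightarrow> real measure) \<Rightarrow> real \<Rightarrow> nat \<Rightarrow> real \<Rightarrow> nat \<Rightarrow> real" where
  "lam \<alpha> D \<theta> K T i = gfun \<alpha> D \<theta> i (Lam \<alpha> D \<theta> K T)"

text \<open>B = {i in [K] : ln(1/Delta_i) < Lambda} (gap 0 gives ln = +infinity, so excluded).\<close>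
definition Bset :: "real \<Rightarrow> (nat \<Rightarrow> real measure) \<Rightarrow> real \<Rightarrow> nat \<Rightarrow> real \<Rightarrow> nat set" where
  "Bset \<alpha> D \<theta> K T = {i \<in> {1..K}. gap D \<theta> i \<noteq> 0 \<and> ln (1 / gap D \<theta> i) < Lam \<alpha> D \<theta> K T}"

definition emp_gap :: "(nat \<Rightarrow> nat \<Rightarrow> 'w \<Rightarrow> real) \<Rightarrow> real \<Rightarrow> nat \<Rightarrow> nat \<Rightarrow> 'w \<Rightarrow> real" where
  "emp_gap X \<theta> i t \<omega> = \<bar>(\<Sum>s\<in>{1..t}. X i s \<omega>) / real t - \<theta>\<bar>"

definition Mevent :: "'w measure \<Rightarrow> (nat \<Rightarrow> nat \<Rightarrow> 'w \<Rightarrow> real) \<Rightarrow> real \<Rightarrow> (nat \<Rightarrow> real measure)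
    \<Rightarrow> real \<Rightarrow> nat \<Rightarrow> real \<Rightarrow> nat \<Rightarrow> real \<Rightarrow> 'w set" where
  "Mevent P X \<alpha> D \<theta> K T i \<kappa> =
     {\<omega> \<in> space P. \<forall>t::nat. 1 \<le> t \<and> real t \<le> lam \<alpha> D \<theta> K T i \<longrightarrow>
        \<bar>emp_gap X \<theta> i t \<omega> - gap D \<theta> i\<bar>
          \<le> sqrt ((lam \<alpha> D \<theta> K T i * (gap D \<theta> i)\<^sup>2 / 5 - \<kappa> / 2
                   + 1 / (4 * \<alpha>) * ln (lam \<alpha> D \<theta> K T i / real t)) / real t)}"

end

theory Submission
  imports Defs
begin

text \<open>
  Write \<open>D\<^sub>t = X\<^sub>i\<^sub>,\<^sub>1 + \<dots> + X\<^sub>i\<^sub>,\<^sub>t - t \<theta>\<^sub>i\<close>, \<open>A = \<lambda>\<^sub>i \<Delta>\<^sub>i\<^sup>2 / 5 - \<kappa> / 2\<close> and \<open>c = 1 / (4 \<alpha>)\<close>.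
  By the reverse triangle inequality, outside \<open>\<M>\<^sub>i\<^sub>,\<^sub>\<kappa>\<close> some \<open>t \<le> \<lambda>\<^sub>i\<close> has
  \<open>|D\<^sub>t| > sqrt (t (A + c ln (\<lambda>\<^sub>i / t)))\<close>. Group the times into dyadic blocks
  \<open>(\<lambda>\<^sub>i / 2\<^sup>k\<^sup>+\<^sup>1, \<lambda>\<^sub>i / 2\<^sup>k]\<close>: on block \<open>k\<close> the threshold is at least
  \<open>sqrt (\<lambda>\<^sub>i / 2\<^sup>k\<^sup>+\<^sup>1 (A + c k ln 2))\<close>, so a maximal Hoeffding inequality bounds the probability
  that the block is bad by \<open>2 e\<^sup>-\<^sup>A 2\<^sup>-\<^sup>c\<^sup>k\<close>. Summing the geometric series gives
  \<open>2 e\<^sup>-\<^sup>A / (1 - 2\<^sup>-\<^sup>c)\<close>, which is at most the stated constant times \<open>e\<^sup>-\<^sup>A\<^sup>/\<^sup>2\<close>.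

  The maximal Hoeffding inequality is Chernoff's bound taken at the first passage time \<open>\<tau>\<close>
  of the partial sums \<open>S\<^sub>t\<close> above \<open>a\<close>: \<open>exp (l S\<^sub>t)\<close> is a submartingale, so
  \<open>E[1(\<tau> = t) exp (l S\<^sub>t)] \<le> E[1(\<tau> = t) exp (l S\<^sub>n)]\<close>, and summing over \<open>t\<close> gives
  \<open>P(max\<^sub>t\<^sub>\<le>\<^sub>n S\<^sub>t \<ge> a) \<le> exp (- l a) E[exp (l S\<^sub>n)]\<close>.
\<close>

section \<open>First passage times\<close>

definition first_passage :: "real \<Rightarrow> (nat \<Rightarrow> real) \<Rightarrow> nat \<Rightarrow> bool" where
  "first_passage a S t \<longleftrightarrow> a \<le> S t \<and> (\<forall>r\<in>{1..<t}. S r < a)"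

lemma first_passage_cong:
  assumes "\<And>r. r \<le> t \<Longrightarrow> S r = S' r"
  shows "first_passage a S t \<longleftrightarrow> first_passage a S' t"
  using assms by (auto simp: first_passage_def)

lemma first_passage_unique:
  assumes "first_passage a S t" "first_passage a S t'" "1 \<le> t" "1 \<le> t'"
  shows "t = t'"
proof -
  have "\<not> r < u" if "first_passage a S r" "first_passage a S u" "1 \<le> r" for r u
  proof
    assume "r < u"
    with \<open>1 \<le> r\<close> have "r \<in> {1..<u}" by simp
    with that(1,2) show False unfolding first_passage_def by fastforce
  qed
  with assms show ?thesis by (meson linorder_neqE_nat)
qed

lemma ex_first_passage:
  assumes "t \<in> {1..n}" "a \<le> S t"
  shows "\<exists>t'\<in>{1..n}. first_passage a S t'"
proof -
  obtain t' where t': "t' \<in> {1..n}" "a \<le> S t'"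
    and "\<forall>r<t'. \<not> (r \<in> {1..n} \<and> a \<le> S r)"
    using exists_least_iff[of "\<lambda>t. t \<in> {1..n} \<and> a \<le> S t"] assms by blast
  then have "first_passage a S t'"
    unfolding first_passage_def by force
  with t' show ?thesis by blast
qed

lemma of_bool_ex_eq_sum_first_passage:
  "of_bool (\<exists>t\<in>{1..n}. a \<le> S t) = (\<Sum>t\<in>{1..n}. of_bool (first_passage a S t) :: real)"
proof (cases "\<exists>t\<in>{1..n}. a \<le> S t")
  case True
  then obtain t where "t \<in> {1..n}" "a \<le> S t" by blast
  from ex_first_passage[of t n a S, OF this] obtain t0 where t0: "t0 \<in> {1..n}" "first_passage a S t0" ..
  have "{1..n} \<inter> {t. first_passage a S t} = {t0}"
  proof (intro equalityI subsetI)
    fix t assume t: "t \<in> {1..n} \<inter> {t. first_passage a S t}"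
    have "t0 = t" by (rule first_passage_unique[OF t0(2)]) (use t t0(1) in auto)
    then show "t \<in> {t0}" by simp
  qed (use t0 in auto)
  with True show ?thesis by (simp only: sum_of_bool_eq finite_atLeastAtMost) simp
next
  case False
  then have "{1..n} \<inter> {t. first_passage a S t} = {}"
    by (auto simp: first_passage_def)
  with False show ?thesis by (simp only: sum_of_bool_eq finite_atLeastAtMost) simp
qed

lemma measurable_first_passage:
  assumes "\<And>r. r \<le> t \<Longrightarrow> (\<lambda>x. S x r) \<in> borel_measurable N"
  shows "Measurable.pred N (\<lambda>x. first_passage a (S x) t)"
proof -
  have [measurable]: "(\<lambda>x. S x t) \<in> borel_measurable N"
    using assms by simp
  have [measurable]: "Measurable.pred N (\<lambda>x. \<forall>r\<in>{1..<t}. S x r < a)"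
  proof (intro pred_intros_finite)
    fix r assume "r \<in> {1..<t}"
    with assms have [measurable]: "(\<lambda>x. S x r) \<in> borel_measurable N" by simp
    show "Measurable.pred N (\<lambda>x. S x r < a)" by measurable
  qed simp
  show ?thesis
    unfolding first_passage_def by measurable
qed

section \<open>Maximal inequalities for sums of independent variables\<close>

lemma (in prob_space) indep_vars_measurable:
  "indep_vars M' X I \<Longrightarrow> i \<in> I \<Longrightarrow> X i \<in> measurable M (M' i)"
  unfolding indep_vars_def by auto

lemma (in prob_space) exp_expectation_le:
  fixes f :: "'a \<Rightarrow> real"
  assumes "integrable M f" "integrable M (\<lambda>x. exp (f x))"
  shows "exp (expectation f) \<le> expectation (\<lambda>x. exp (f x))"
  by (rule jensens_inequality[of f UNIV _ _ exp]) (use assms exp_convex in auto)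

lemma (in prob_space) integrable_mult_exp_sum:
  fixes Z :: "'i \<Rightarrow> 'a \<Rightarrow> real"
  assumes "finite J" "\<And>s. s \<in> J \<Longrightarrow> random_variable borel (Z s)"
    and "\<And>s. s \<in> J \<Longrightarrow> AE x in M. \<bar>Z s x\<bar> \<le> B"
    and "random_variable borel V" "\<And>x. x \<in> space M \<Longrightarrow> \<bar>V x\<bar> \<le> 1"
  shows "integrable M (\<lambda>x. V x * exp (l * (\<Sum>s\<in>J. Z s x)))"
proof (rule integrable_const_bound)
  have "AE x in M. \<forall>s\<in>J. \<bar>Z s x\<bar> \<le> B"
    using assms(1,3) by (rule AE_finite_allI)
  then show "AE x in M. norm (V x * exp (l * (\<Sum>s\<in>J. Z s x))) \<le> exp (\<bar>l\<bar> * (card J * B))"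
  proof (rule AE_mp, intro AE_I2 impI)
    fix x assume x: "x \<in> space M" and Z: "\<forall>s\<in>J. \<bar>Z s x\<bar> \<le> B"
    have "\<bar>\<Sum>s\<in>J. Z s x\<bar> \<le> (\<Sum>s\<in>J. B)"
      using Z by (intro order_trans[OF sum_abs] sum_mono) auto
    then have "\<bar>l\<bar> * \<bar>\<Sum>s\<in>J. Z s x\<bar> \<le> \<bar>l\<bar> * (card J * B)"
      by (intro mult_left_mono) auto
    then have "l * (\<Sum>s\<in>J. Z s x) \<le> \<bar>l\<bar> * (card J * B)"
      using abs_ge_self[of "l * (\<Sum>s\<in>J. Z s x)"] by (simp add: abs_mult)
    then have "exp (l * (\<Sum>s\<in>J. Z s x)) \<le> exp (\<bar>l\<bar> * (card J * B))"
      by simp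
    then show "norm (V x * exp (l * (\<Sum>s\<in>J. Z s x))) \<le> exp (\<bar>l\<bar> * (card J * B))"
      using mult_mono[OF assms(5)[OF x]] by (simp add: abs_mult)
  qed
qed (use assms in measurable)

lemma (in prob_space) integrable_exp_sum:
  fixes Z :: "'i \<Rightarrow> 'a \<Rightarrow> real"
  assumes "finite J" "\<And>s. s \<in> J \<Longrightarrow> random_variable borel (Z s)"
    and "\<And>s. s \<in> J \<Longrightarrow> AE x in M. \<bar>Z s x\<bar> \<le> B"
  shows "integrable M (\<lambda>x. exp (l * (\<Sum>s\<in>J. Z s x)))"
  using integrable_mult_exp_sum[where V = "\<lambda>_. 1", OF assms] by simp

lemma (in prob_space) expectation_exp_sum_indep:
  fixes Z :: "'i \<Rightarrow> 'a \<Rightarrow> real"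
  assumes J: "finite J" and indep: "indep_vars (\<lambda>_. borel) Z J"
    and bounded: "\<And>s. s \<in> J \<Longrightarrow> AE x in M. \<bar>Z s x\<bar> \<le> B"
  shows "expectation (\<lambda>x. exp (l * (\<Sum>s\<in>J. Z s x)))
           = (\<Prod>s\<in>J. expectation (\<lambda>x. exp (l * Z s x)))"
proof -
  have Z: "random_variable borel (Z s)" if "s \<in> J" for s
    using indep_vars_measurable[OF indep that] .
  have "integrable M (\<lambda>x. exp (l * Z s x))" if "s \<in> J" for s
    using integrable_exp_sum[of "{s}" Z B l] Z bounded that by simp
  then have "expectation (\<lambda>x. \<Prod>s\<in>J. exp (l * Z s x))
               = (\<Prod>s\<in>J. expectation (\<lambda>x. exp (l * Z s x)))"
    by (intro indep_vars_lebesgue_integral J indep_vars_compose2[OF indep]) auto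
  then show ?thesis
    using J by (simp add: sum_distrib_left exp_sum)
qed

lemma (in prob_space) expectation_exp_sum_ge_1:
  fixes Z :: "'i \<Rightarrow> 'a \<Rightarrow> real"
  assumes J: "finite J" and indep: "indep_vars (\<lambda>_. borel) Z J"
    and bounded: "\<And>s. s \<in> J \<Longrightarrow> AE x in M. \<bar>Z s x\<bar> \<le> B"
    and mean: "\<And>s. s \<in> J \<Longrightarrow> expectation (Z s) = 0"
  shows "1 \<le> expectation (\<lambda>x. exp (l * (\<Sum>s\<in>J. Z s x)))"
proof -
  have "1 \<le> expectation (\<lambda>x. exp (l * Z s x))" if s: "s \<in> J" for s
  proof -
    have [measurable]: "random_variable borel (Z s)"
      using indep_vars_measurable[OF indep s] .
    have "integrable M (Z s)"
      using bounded[OF s] by (intro integrable_const_bound[where B = B]) auto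
    moreover have "integrable M (\<lambda>x. exp (l * Z s x))"
      using integrable_exp_sum[of "{s}" Z B l] bounded s by simp
    ultimately have "exp (expectation (\<lambda>x. l * Z s x)) \<le> expectation (\<lambda>x. exp (l * Z s x))"
      by (intro exp_expectation_le) auto
    with mean[OF s] show ?thesis by simp
  qed
  then show ?thesis
    using expectation_exp_sum_indep[OF J indep bounded] by (simp add: prod_ge_1)
qed

text \<open>
  \<open>F\<close> applied to the restriction of \<open>Z\<close> to \<open>{1..t}\<close> is an arbitrary \<open>[0,1]\<close>-valued variable
  determined by \<open>Z\<^sub>1, \<dots>, Z\<^sub>t\<close>; the lemma is the submartingale property of \<open>exp (l S\<^sub>t)\<close>.
\<close>

lemma (in prob_space) expectation_mult_exp_partial_sum_mono:
  fixes Z :: "nat \<Rightarrow> 'a \<Rightarrow> real" and F :: "(nat \<Rightarrow> real) \<Rightarrow> real"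
  assumes indep: "indep_vars (\<lambda>_. borel) Z UNIV"
    and bounded: "\<And>s. AE x in M. \<bar>Z s x\<bar> \<le> B"
    and mean: "\<And>s. expectation (Z s) = 0"
    and F: "F \<in> borel_measurable (PiM {1..t} (\<lambda>_. borel))" "\<And>f. F f \<in> {0..1}"
    and "t \<le> n"
  shows "expectation (\<lambda>x. F (restrict (\<lambda>s. Z s x) {1..t}) * exp (l * (\<Sum>s\<in>{1..t}. Z s x)))
       \<le> expectation (\<lambda>x. F (restrict (\<lambda>s. Z s x) {1..t}) * exp (l * (\<Sum>s\<in>{1..n}. Z s x)))"
proof -
  have [measurable]: "random_variable borel (Z s)" for s
    using indep_vars_measurable[OF indep] by simp
  define V where "V x = F (restrict (\<lambda>s. Z s x) {1..t}) * exp (l * (\<Sum>s\<in>{1..t}. Z s x))" for x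
  define R where "R x = exp (l * (\<Sum>s\<in>{t<..n}. Z s x))" for x
  have past: "(\<lambda>f. F f * exp (l * (\<Sum>s\<in>{1..t}. f s))) \<in> borel_measurable (PiM {1..t} (\<lambda>_. borel))"
    by (intro borel_measurable_times F(1)) measurable
  have future: "(\<lambda>f. exp (l * (\<Sum>s\<in>{t<..n}. f s))) \<in> borel_measurable (PiM {t<..n} (\<lambda>_. borel))"
    by measurable
  have "{1..t} \<inter> {t<..n} = {}" by auto
  then have "indep_var borel ((\<lambda>f. F f * exp (l * (\<Sum>s\<in>{1..t}. f s))) \<circ> (\<lambda>x. restrict (\<lambda>s. Z s x) {1..t}))
                  borel ((\<lambda>f. exp (l * (\<Sum>s\<in>{t<..n}. f s))) \<circ> (\<lambda>x. restrict (\<lambda>s. Z s x) {t<..n}))"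
    by (intro indep_var_compose[OF indep_var_restrict[OF indep] past future]) auto
  moreover have "(\<lambda>f. F f * exp (l * (\<Sum>s\<in>{1..t}. f s))) \<circ> (\<lambda>x. restrict (\<lambda>s. Z s x) {1..t}) = V"
    by (auto simp: V_def intro!: sum.cong)
  moreover have "(\<lambda>f. exp (l * (\<Sum>s\<in>{t<..n}. f s))) \<circ> (\<lambda>x. restrict (\<lambda>s. Z s x) {t<..n}) = R"
    by (auto simp: R_def intro!: sum.cong)
  ultimately have indep_VR: "indep_var borel V borel R" by simp
  have F_restrict: "(\<lambda>x. F (restrict (\<lambda>s. Z s x) {1..t})) \<in> borel_measurable M"
    by (rule measurable_compose[OF measurable_restrict F(1)]) simp
  have V_int: "integrable M V"
    unfolding V_def using F(2) by (intro integrable_mult_exp_sum[OF _ _ bounded] F_restrict) auto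
  have R_int: "integrable M R"
    unfolding R_def by (intro integrable_exp_sum[OF _ _ bounded]) auto
  have "0 \<le> expectation V"
    using F(2) by (intro integral_nonneg_AE AE_I2) (auto simp: V_def)
  moreover have "1 \<le> expectation R"
    unfolding R_def using indep
    by (intro expectation_exp_sum_ge_1[OF _ _ bounded mean] indep_vars_subset[OF indep]) auto
  ultimately have "expectation V \<le> expectation V * expectation R"
    using mult_left_mono by fastforce
  also have "\<dots> = expectation (\<lambda>x. V x * R x)"
    by (rule indep_var_lebesgue_integral[OF indep_VR V_int R_int, symmetric])
  also have "(\<lambda>x. V x * R x) = (\<lambda>x. F (restrict (\<lambda>s. Z s x) {1..t}) * exp (l * (\<Sum>s\<in>{1..n}. Z s x)))"
  proof -
    have "{1..n} = {1..t} \<union> {t<..n}" using \<open>t \<le> n\<close> by auto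
    then have "(\<Sum>s\<in>{1..n}. Z s x) = (\<Sum>s\<in>{1..t}. Z s x) + (\<Sum>s\<in>{t<..n}. Z s x)" for x
      by (simp add: sum.union_disjoint ivl_disj_int)
    then show ?thesis by (simp add: V_def R_def fun_eq_iff distrib_left exp_add)
  qed
  finally show ?thesis unfolding V_def .
qed

lemma (in prob_space) first_passage_exp_partial_sum_le:
  fixes Z :: "nat \<Rightarrow> 'a \<Rightarrow> real"
  assumes indep: "indep_vars (\<lambda>_. borel) Z UNIV"
    and bounded: "\<And>s. AE x in M. \<bar>Z s x\<bar> \<le> B"
    and mean: "\<And>s. expectation (Z s) = 0"
    and "0 \<le> l" "t \<le> n"
  shows "exp (l * a) * expectation (\<lambda>x. of_bool (first_passage a (\<lambda>r. \<Sum>s\<in>{1..r}. Z s x) t))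
       \<le> expectation (\<lambda>x. of_bool (first_passage a (\<lambda>r. \<Sum>s\<in>{1..r}. Z s x) t)
                          * exp (l * (\<Sum>s\<in>{1..n}. Z s x)))"
proof -
  have [measurable]: "random_variable borel (Z s)" for s
    using indep_vars_measurable[OF indep] by simp
  define F where "F f = (of_bool (first_passage a (\<lambda>r. \<Sum>s\<in>{1..r}. f s) t) :: real)"
    for f :: "nat \<Rightarrow> real"
  define V where "V x = F (restrict (\<lambda>s. Z s x) {1..t})" for x
  have [measurable]: "Measurable.pred (PiM {1..t} (\<lambda>_. borel)) (\<lambda>f. first_passage a (\<lambda>r. \<Sum>s\<in>{1..r}. f s) t)"
    by (rule measurable_first_passage) measurable
  then have F_meas: "F \<in> borel_measurable (PiM {1..t} (\<lambda>_. borel))"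
    unfolding F_def by measurable
  have V_eq: "V = (\<lambda>x. of_bool (first_passage a (\<lambda>r. \<Sum>s\<in>{1..r}. Z s x) t))"
    unfolding V_def F_def by (intro ext arg_cong[where f = of_bool] first_passage_cong sum.cong) auto
  have V_meas: "random_variable borel V"
    unfolding V_def by (rule measurable_compose[OF measurable_restrict F_meas]) simp
  have V_le_1: "\<bar>V x\<bar> \<le> 1" for x
    by (simp add: V_def F_def)
  have "exp (l * a) * expectation V = expectation (\<lambda>x. V x * exp (l * a))"
    by (simp add: mult.commute)
  also have "\<dots> \<le> expectation (\<lambda>x. V x * exp (l * (\<Sum>s\<in>{1..t}. Z s x)))"
  proof (rule integral_mono)
    show "integrable M (\<lambda>x. V x * exp (l * a))"
      using V_meas V_le_1
      by (intro Bochner_Integration.integrable_mult_left integrable_const_bound[where B = 1]) auto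
    show "integrable M (\<lambda>x. V x * exp (l * (\<Sum>s\<in>{1..t}. Z s x)))"
      by (intro integrable_mult_exp_sum[OF _ _ bounded V_meas V_le_1]) auto
    show "V x * exp (l * a) \<le> V x * exp (l * (\<Sum>s\<in>{1..t}. Z s x))" for x
      using \<open>0 \<le> l\<close> by (auto simp: V_eq first_passage_def intro: mult_left_mono)
  qed
  also have "\<dots> \<le> expectation (\<lambda>x. V x * exp (l * (\<Sum>s\<in>{1..n}. Z s x)))"
    using expectation_mult_exp_partial_sum_mono[OF indep bounded mean F_meas _ \<open>t \<le> n\<close>]
    unfolding V_def F_def by simp
  finally show ?thesis
    unfolding V_eq .
qed

theorem (in prob_space) exponential_maximal_ineq:
  fixes Z :: "nat \<Rightarrow> 'a \<Rightarrow> real"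
  assumes indep: "indep_vars (\<lambda>_. borel) Z UNIV"
    and bounded: "\<And>s. AE x in M. \<bar>Z s x\<bar> \<le> B"
    and mean: "\<And>s. expectation (Z s) = 0"
    and "0 \<le> l"
  shows "exp (l * a) * prob {x\<in>space M. \<exists>t\<in>{1..n}. a \<le> (\<Sum>s\<in>{1..t}. Z s x)}
           \<le> expectation (\<lambda>x. exp (l * (\<Sum>s\<in>{1..n}. Z s x)))"
proof -
  have [measurable]: "random_variable borel (Z s)" for s
    using indep_vars_measurable[OF indep] by simp
  define S where "S x r = (\<Sum>s\<in>{1..r}. Z s x)" for x r
  define V where "V t x = (of_bool (first_passage a (S x) t) :: real)" for t x
  have [measurable]: "Measurable.pred M (\<lambda>x. first_passage a (S x) t)" for t
    unfolding S_def by (rule measurable_first_passage) measurable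
  then have V_meas: "random_variable borel (V t)" for t
    unfolding V_def by measurable
  have V_int: "integrable M (V t)" for t
    using V_meas by (intro integrable_const_bound[where B = 1]) (auto simp: V_def)
  have V_sum: "(\<Sum>t\<in>{1..n}. V t x) = of_bool (\<exists>t\<in>{1..n}. a \<le> S x t)" for x
    unfolding V_def of_bool_ex_eq_sum_first_passage ..
  have V_sum_le_1: "\<bar>\<Sum>t\<in>{1..n}. V t x\<bar> \<le> 1" for x
    unfolding V_sum by (cases "\<exists>t\<in>{1..n}. a \<le> S x t") simp_all
  have integrable_V_exp: "integrable M (\<lambda>x. W x * exp (l * S x n))"
    if "random_variable borel W" "\<And>x. \<bar>W x\<bar> \<le> 1" for W
    unfolding S_def using that by (intro integrable_mult_exp_sum[OF _ _ bounded]) auto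
  have "prob {x\<in>space M. \<exists>t\<in>{1..n}. a \<le> S x t}
      = expectation (indicator {x\<in>space M. \<exists>t\<in>{1..n}. a \<le> S x t})"
    by (simp add: Int_absorb2)
  also have "\<dots> = expectation (\<lambda>x. \<Sum>t\<in>{1..n}. V t x)"
    unfolding V_sum by (intro Bochner_Integration.integral_cong) (auto simp: indicator_def)
  finally have "exp (l * a) * prob {x\<in>space M. \<exists>t\<in>{1..n}. a \<le> S x t}
      = (\<Sum>t\<in>{1..n}. exp (l * a) * expectation (V t))"
    by (simp add: Bochner_Integration.integral_sum sum_distrib_left V_int)
  also have "\<dots> \<le> (\<Sum>t\<in>{1..n}. expectation (\<lambda>x. V t x * exp (l * S x n)))"
    using first_passage_exp_partial_sum_le[OF indep bounded mean \<open>0 \<le> l\<close>]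
    by (intro sum_mono) (simp add: V_def[abs_def] S_def[abs_def])
  also have "\<dots> = expectation (\<lambda>x. (\<Sum>t\<in>{1..n}. V t x) * exp (l * S x n))"
    unfolding sum_distrib_right
    by (intro Bochner_Integration.integral_sum[symmetric] integrable_V_exp V_meas) (simp add: V_def)
  also have "\<dots> \<le> expectation (\<lambda>x. exp (l * S x n))"
  proof (rule integral_mono)
    show "integrable M (\<lambda>x. (\<Sum>t\<in>{1..n}. V t x) * exp (l * S x n))"
      using V_meas V_sum_le_1 by (intro integrable_V_exp) auto
    show "integrable M (\<lambda>x. exp (l * S x n))"
      using integrable_V_exp[of "\<lambda>_. 1"] by simp
    show "(\<Sum>t\<in>{1..n}. V t x) * exp (l * S x n) \<le> exp (l * S x n)" for x
      using mult_right_mono[OF order_trans[OF abs_ge_self V_sum_le_1], of "exp (l * S x n)"] by simp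
  qed
  finally show ?thesis
    unfolding S_def .
qed

lemma (in prob_space) Hoeffdings_lemma_expectation:
  fixes f :: "'a \<Rightarrow> real"
  assumes "random_variable borel f" "AE x in M. f x \<in> {lo..hi}" "0 < l"
  shows "expectation (\<lambda>x. exp (l * (f x - expectation f))) \<le> exp (l\<^sup>2 * (hi - lo)\<^sup>2 / 8)"
proof -
  interpret interval_bounded_random_variable M f lo hi
    using assms(1,2) by unfold_locales
  have [measurable]: "f \<in> borel_measurable M"
    using assms(1) by simp
  have "AE x in M. norm (exp (l * (f x - expectation f))) \<le> exp (l * (hi - expectation f))"
    using AE_in_interval by eventually_elim (use assms(3) in \<open>auto intro: mult_left_mono\<close>)
  then have "integrable M (\<lambda>x. exp (l * (f x - expectation f)))"
    by (rule integrable_const_bound) measurable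
  then have "ennreal (expectation (\<lambda>x. exp (l * (f x - expectation f))))
      = (\<integral>\<^sup>+x. exp (l * (f x - expectation f)) \<partial>M)"
    by (subst nn_integral_eq_integral) auto
  also have "\<dots> \<le> ennreal (exp (l\<^sup>2 * (hi - lo)\<^sup>2 / 8))"
    by (rule Hoeffdings_lemma_nn_integral[OF assms(3)])
  finally show ?thesis
    by (simp add: ennreal_le_iff)
qed

lemma (in prob_space) expectation_exp_sum_le_Hoeffding:
  fixes Y :: "'i \<Rightarrow> 'a \<Rightarrow> real"
  assumes J: "finite J" and indep: "indep_vars (\<lambda>_. borel) Y J"
    and bounded: "\<And>s. s \<in> J \<Longrightarrow> AE x in M. Y s x \<in> {lo..hi}"
    and mean: "\<And>s. s \<in> J \<Longrightarrow> expectation (Y s) = \<mu>" and "0 < l"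
  shows "expectation (\<lambda>x. exp (l * (\<Sum>s\<in>J. Y s x - \<mu>))) \<le> exp (card J * (l\<^sup>2 * (hi - lo)\<^sup>2 / 8))"
proof -
  have "expectation (\<lambda>x. exp (l * (\<Sum>s\<in>J. Y s x - \<mu>)))
      = (\<Prod>s\<in>J. expectation (\<lambda>x. exp (l * (Y s x - \<mu>))))"
  proof (rule expectation_exp_sum_indep[OF J])
    show "indep_vars (\<lambda>_. borel) (\<lambda>s x. Y s x - \<mu>) J"
      by (rule indep_vars_compose2[OF indep]) simp
    show "AE x in M. \<bar>Y s x - \<mu>\<bar> \<le> \<bar>lo - \<mu>\<bar> + \<bar>hi - \<mu>\<bar>" if "s \<in> J" for s
      using bounded[OF that] by eventually_elim auto
  qed
  also have "\<dots> \<le> (\<Prod>s\<in>J. exp (l\<^sup>2 * (hi - lo)\<^sup>2 / 8))"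
  proof (rule prod_mono)
    fix s assume "s \<in> J"
    then have "expectation (\<lambda>x. exp (l * (Y s x - \<mu>))) \<le> exp (l\<^sup>2 * (hi - lo)\<^sup>2 / 8)"
      using Hoeffdings_lemma_expectation[OF indep_vars_measurable[OF indep] bounded \<open>0 < l\<close>] mean
      by simp
    then show "0 \<le> expectation (\<lambda>x. exp (l * (Y s x - \<mu>)))
        \<and> expectation (\<lambda>x. exp (l * (Y s x - \<mu>))) \<le> exp (l\<^sup>2 * (hi - lo)\<^sup>2 / 8)"
      by (simp add: integral_nonneg_AE)
  qed
  also have "\<dots> = exp (card J * (l\<^sup>2 * (hi - lo)\<^sup>2 / 8))"
    by (simp add: exp_of_nat_mult[symmetric])
  finally show ?thesis .
qed

theorem (in prob_space) maximal_Hoeffding_ineq_ge: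
  fixes Y :: "nat \<Rightarrow> 'a \<Rightarrow> real"
  assumes indep: "indep_vars (\<lambda>_. borel) Y UNIV"
    and bounded: "\<And>s. AE x in M. Y s x \<in> {lo..hi}" and "lo < hi"
    and mean: "\<And>s. expectation (Y s) = \<mu>"
    and "0 \<le> a"
  shows "prob {x\<in>space M. \<exists>t\<in>{1..n}. a \<le> (\<Sum>s\<in>{1..t}. Y s x) - t * \<mu>}
           \<le> exp (- 2 * a\<^sup>2 / (n * (hi - lo)\<^sup>2))"
proof (cases "a = 0 \<or> n = 0")
  case True
  then show ?thesis by auto
next
  case False
  have [measurable]: "random_variable borel (Y s)" for s
    using indep_vars_measurable[OF indep] by simp
  define d where "d = (hi - lo)\<^sup>2"
  define l where "l = 4 * a / (n * d)"
  define Z where "Z s x = Y s x - \<mu>" for s x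
  have "0 < d" using \<open>lo < hi\<close> by (simp add: d_def)
  with False \<open>0 \<le> a\<close> have "0 < l" by (simp add: l_def)
  have indep_Z: "indep_vars (\<lambda>_. borel) Z UNIV"
    unfolding Z_def by (rule indep_vars_compose2[OF indep]) simp
  have bounded_Z: "AE x in M. \<bar>Z s x\<bar> \<le> \<bar>lo - \<mu>\<bar> + \<bar>hi - \<mu>\<bar>" for s
    using bounded[of s] by eventually_elim (auto simp: Z_def)
  have "integrable M (Y s)" for s
    using bounded[of s] by (intro integrable_const_bound[where B = "\<bar>lo\<bar> + \<bar>hi\<bar>"]) (auto elim: eventually_mono)
  then have mean_Z: "expectation (Z s) = 0" for s
    using mean[of s] by (simp add: Z_def[abs_def] prob_space)
  have "{x\<in>space M. \<exists>t\<in>{1..n}. a \<le> (\<Sum>s\<in>{1..t}. Y s x) - t * \<mu>}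
      = {x\<in>space M. \<exists>t\<in>{1..n}. a \<le> (\<Sum>s\<in>{1..t}. Z s x)}"
    by (simp add: Z_def sum_subtractf)
  moreover have "expectation (\<lambda>x. exp (l * (\<Sum>s\<in>{1..n}. Z s x))) \<le> exp (n * (l\<^sup>2 * d / 8))"
    using expectation_exp_sum_le_Hoeffding[OF _ indep_vars_subset[OF indep] bounded mean \<open>0 < l\<close>, of "{1..n}"]
    by (simp add: Z_def d_def)
  ultimately have "exp (l * a) * prob {x\<in>space M. \<exists>t\<in>{1..n}. a \<le> (\<Sum>s\<in>{1..t}. Y s x) - t * \<mu>}
      \<le> exp (n * (l\<^sup>2 * d / 8))"
    using exponential_maximal_ineq[OF indep_Z bounded_Z mean_Z, of l a n] \<open>0 < l\<close> by simp
  then have "prob {x\<in>space M. \<exists>t\<in>{1..n}. a \<le> (\<Sum>s\<in>{1..t}. Y s x) - t * \<mu>}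
      \<le> exp (n * (l\<^sup>2 * d / 8)) / exp (l * a)"
    by (simp add: pos_le_divide_eq mult.commute)
  also have "\<dots> = exp (n * (l\<^sup>2 * d / 8) - l * a)"
    by (rule exp_diff[symmetric])
  also have "n * (l\<^sup>2 * d / 8) - l * a = - 2 * a\<^sup>2 / (n * d)"
    using False \<open>0 < d\<close> by (simp add: l_def field_simps power2_eq_square)
  finally show ?thesis by (simp add: d_def)
qed

corollary (in prob_space) maximal_Hoeffding_ineq_abs_ge:
  fixes Y :: "nat \<Rightarrow> 'a \<Rightarrow> real"
  assumes indep: "indep_vars (\<lambda>_. borel) Y UNIV"
    and bounded: "\<And>s. AE x in M. Y s x \<in> {lo..hi}" and "lo < hi"
    and mean: "\<And>s. expectation (Y s) = \<mu>"
    and "0 \<le> a"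
  shows "prob {x\<in>space M. \<exists>t\<in>{1..n}. a \<le> \<bar>(\<Sum>s\<in>{1..t}. Y s x) - t * \<mu>\<bar>}
           \<le> 2 * exp (- 2 * a\<^sup>2 / (n * (hi - lo)\<^sup>2))"
proof -
  have [measurable]: "random_variable borel (Y s)" for s
    using indep_vars_measurable[OF indep] by simp
  let ?up = "{x\<in>space M. \<exists>t\<in>{1..n}. a \<le> (\<Sum>s\<in>{1..t}. Y s x) - t * \<mu>}"
  let ?down = "{x\<in>space M. \<exists>t\<in>{1..n}. a \<le> (\<Sum>s\<in>{1..t}. - Y s x) - t * - \<mu>}"
  have "prob ?down \<le> exp (- 2 * a\<^sup>2 / (n * (- lo - - hi)\<^sup>2))"
  proof (rule maximal_Hoeffding_ineq_ge)
    show "indep_vars (\<lambda>_. borel) (\<lambda>s x. - Y s x) UNIV"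
      by (rule indep_vars_compose2[OF indep]) simp
    show "AE x in M. - Y s x \<in> {- hi..- lo}" for s
      using bounded[of s] by eventually_elim auto
    show "expectation (\<lambda>x. - Y s x) = - \<mu>" for s
      using mean[of s] by simp
  qed (use assms in auto)
  moreover have "prob ?up \<le> exp (- 2 * a\<^sup>2 / (n * (hi - lo)\<^sup>2))"
    by (rule maximal_Hoeffding_ineq_ge[OF assms])
  moreover have "{x\<in>space M. \<exists>t\<in>{1..n}. a \<le> \<bar>(\<Sum>s\<in>{1..t}. Y s x) - t * \<mu>\<bar>} = ?up \<union> ?down"
  proof -
    have "a \<le> \<bar>(\<Sum>s\<in>{1..t}. Y s x) - t * \<mu>\<bar>
        \<longleftrightarrow> a \<le> (\<Sum>s\<in>{1..t}. Y s x) - t * \<mu> \<or> a \<le> (\<Sum>s\<in>{1..t}. - Y s x) - t * - \<mu>" for x t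
      by (auto simp: sum_negf abs_if)
    then show ?thesis by (auto simp only: bex_disj_distrib)
  qed
  moreover have "prob (?up \<union> ?down) \<le> prob ?up + prob ?down"
    by (rule measure_Un_le) measurable
  ultimately show ?thesis
    by (simp add: power2_commute)
qed

section \<open>Peeling over dyadic blocks\<close>

lemma dyadic_block:
  fixes L :: real and t :: nat
  assumes "1 \<le> t" "t \<le> L"
  obtains k :: nat where "k \<le> nat \<lfloor>L\<rfloor>" "t \<le> nat \<lfloor>L / 2 ^ k\<rfloor>" "L / 2 ^ (k + 1) < t"
    "k * ln 2 \<le> ln (L / t)"
proof -
  define y where "y = L / t"
  have "1 \<le> y" "y \<le> L"
    using assms by (auto simp: y_def field_simps)
  obtain m where m: "y < 2 ^ m" and least: "\<forall>i<m. \<not> y < 2 ^ i"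
    using exists_least_iff[of "\<lambda>m. y < 2 ^ m"] real_arch_pow[of 2 y] by auto
  have "m \<noteq> 0" using m \<open>1 \<le> y\<close> by (intro notI) simp
  then obtain k where k: "m = k + 1" by (metis Suc_eq_plus1 not0_implies_Suc)
  have "2 ^ k \<le> y" using least k by (simp add: not_less)
  have "real k < 2 ^ k" by (rule of_nat_less_two_power)
  with \<open>2 ^ k \<le> y\<close> \<open>y \<le> L\<close> have "k \<le> nat \<lfloor>L\<rfloor>"
    by (intro le_nat_floor) linarith
  moreover have "t \<le> nat \<lfloor>L / 2 ^ k\<rfloor>"
    using \<open>2 ^ k \<le> y\<close> assms(1) by (simp add: y_def le_nat_floor field_simps)
  moreover have "L / 2 ^ (k + 1) < t"
    using m k assms(1) by (simp add: y_def field_simps)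
  moreover have "k * ln 2 \<le> ln y"
    using \<open>2 ^ k \<le> y\<close> \<open>1 \<le> y\<close> by (simp add: ln_realpow[symmetric])
  ultimately show ?thesis
    using that by (simp add: y_def)
qed

lemma dyadic_block_threshold:
  fixes L A c :: real and t :: nat
  assumes "1 \<le> t" "t \<le> L" "0 \<le> A" "0 \<le> c"
  obtains k :: nat where "k \<le> nat \<lfloor>L\<rfloor>" "t \<le> nat \<lfloor>L / 2 ^ k\<rfloor>"
    "sqrt (L / 2 ^ (k + 1) * (A + c * k * ln 2)) \<le> sqrt (t * (A + c * ln (L / t)))"
proof -
  obtain k where k: "k \<le> nat \<lfloor>L\<rfloor>" "t \<le> nat \<lfloor>L / 2 ^ k\<rfloor>" "L / 2 ^ (k + 1) < t"
    "k * ln 2 \<le> ln (L / t)"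
    using dyadic_block[OF assms(1,2)] by blast
  have "L / 2 ^ (k + 1) * (A + c * k * ln 2) \<le> t * (A + c * ln (L / t))"
  proof (rule mult_mono)
    show "A + c * k * ln 2 \<le> A + c * ln (L / t)"
      using mult_left_mono[OF k(4) assms(4)] by (simp add: mult.assoc)
  qed (use k(3) assms(3,4) in auto)
  with k(1,2) that show ?thesis
    using real_sqrt_le_mono by blast
qed

lemma (in prob_space) prob_dyadic_block_le:
  fixes Y :: "nat \<Rightarrow> 'a \<Rightarrow> real" and \<mu> A c L :: real
  assumes indep: "indep_vars (\<lambda>_. borel) Y UNIV"
    and bounded: "\<And>s. AE x in M. Y s x \<in> {0..1}"
    and mean: "\<And>s. expectation (Y s) = \<mu>"
    and "0 \<le> A" "0 \<le> c"
  shows "prob {x\<in>space M. \<exists>t\<in>{1..nat \<lfloor>L / 2 ^ k\<rfloor>}.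
            sqrt (L / 2 ^ (k + 1) * (A + c * k * ln 2)) \<le> \<bar>(\<Sum>s\<in>{1..t}. Y s x) - t * \<mu>\<bar>}
         \<le> 2 * exp (- A) * (2 powr (- c)) ^ k"
    (is "prob ?Bad \<le> _")
proof (cases "nat \<lfloor>L / 2 ^ k\<rfloor> = 0")
  case True
  then show ?thesis by simp
next
  case False
  define n where "n = nat \<lfloor>L / 2 ^ k\<rfloor>"
  define E where "E = A + c * k * ln 2"
  have "0 \<le> E" using \<open>0 \<le> A\<close> \<open>0 \<le> c\<close> by (simp add: E_def)
  have "1 \<le> n"
    using False unfolding n_def by linarith
  then have "1 \<le> real n"
    by simp
  have "\<not> L / 2 ^ k \<le> 0"
    using False nat_floor_neg[of "L / 2 ^ k"] by auto
  then have "real n \<le> L / 2 ^ k"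
    unfolding n_def by (intro of_nat_floor) simp
  have "0 < L"
  proof (rule ccontr)
    assume "\<not> 0 < L"
    then have "L / 2 ^ k \<le> 0" by (simp add: divide_nonpos_pos)
    with \<open>\<not> L / 2 ^ k \<le> 0\<close> show False ..
  qed
  have "prob ?Bad \<le> 2 * exp (- 2 * (sqrt (L / 2 ^ (k + 1) * E))\<^sup>2 / n)"
    using maximal_Hoeffding_ineq_abs_ge[OF indep bounded _ mean, of "sqrt (L / 2 ^ (k + 1) * E)" n]
      \<open>0 < L\<close> \<open>0 \<le> E\<close> by (simp add: n_def E_def)
  also have "- 2 * (sqrt (L / 2 ^ (k + 1) * E))\<^sup>2 / n \<le> - E"
  proof -
    have "n * E \<le> L / 2 ^ k * E"
      using \<open>real n \<le> L / 2 ^ k\<close> \<open>0 \<le> E\<close> by (rule mult_right_mono)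
    also have "\<dots> = 2 * (sqrt (L / 2 ^ (k + 1) * E))\<^sup>2"
      using \<open>0 < L\<close> \<open>0 \<le> E\<close> by simp
    finally show ?thesis
      using \<open>1 \<le> real n\<close> by (simp add: field_simps)
  qed
  also have "exp (- E) = exp (- A) * (2 powr (- c)) ^ k"
    by (simp add: E_def powr_def exp_diff exp_minus exp_of_nat_mult[symmetric] field_simps)
  finally show ?thesis by simp
qed

theorem (in prob_space) peeling_Hoeffding_ineq:
  fixes Y :: "nat \<Rightarrow> 'a \<Rightarrow> real" and \<mu> A c L :: real
  assumes indep: "indep_vars (\<lambda>_. borel) Y UNIV"
    and bounded: "\<And>s. AE x in M. Y s x \<in> {0..1}"
    and mean: "\<And>s. expectation (Y s) = \<mu>"
    and "0 \<le> A" "0 < c"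
  shows "prob {x\<in>space M. \<exists>t::nat. 1 \<le> t \<and> t \<le> L \<and>
            sqrt (t * (A + c * ln (L / t))) < \<bar>(\<Sum>s\<in>{1..t}. Y s x) - t * \<mu>\<bar>}
         \<le> 2 * exp (- A) / (1 - 2 powr (- c))"
proof -
  have [measurable]: "random_variable borel (Y s)" for s
    using indep_vars_measurable[OF indep] by simp
  define r where "r = 2 powr (- c)"
  have "0 < r" "r < 1"
    using \<open>0 < c\<close> by (auto simp: r_def powr_def)
  define Bad where "Bad k = {x\<in>space M. \<exists>t\<in>{1..nat \<lfloor>L / 2 ^ k\<rfloor>}.
      sqrt (L / 2 ^ (k + 1) * (A + c * k * ln 2)) \<le> \<bar>(\<Sum>s\<in>{1..t}. Y s x) - t * \<mu>\<bar>}" for k :: nat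
  have Bad_sets: "Bad k \<in> sets M" for k
    unfolding Bad_def by measurable
  have "{x\<in>space M. \<exists>t::nat. 1 \<le> t \<and> t \<le> L \<and>
            sqrt (t * (A + c * ln (L / t))) < \<bar>(\<Sum>s\<in>{1..t}. Y s x) - t * \<mu>\<bar>}
        \<subseteq> (\<Union>k\<in>{..nat \<lfloor>L\<rfloor>}. Bad k)"
  proof safe
    fix x t
    assume x: "x \<in> space M" and t: "1 \<le> t" "t \<le> L"
      and deviation: "sqrt (t * (A + c * ln (L / t))) < \<bar>(\<Sum>s\<in>{1..t}. Y s x) - t * \<mu>\<bar>"
    obtain k where k: "k \<le> nat \<lfloor>L\<rfloor>" "t \<le> nat \<lfloor>L / 2 ^ k\<rfloor>"
      "sqrt (L / 2 ^ (k + 1) * (A + c * k * ln 2)) \<le> sqrt (t * (A + c * ln (L / t)))"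
      using dyadic_block_threshold[OF t \<open>0 \<le> A\<close>, of c] \<open>0 < c\<close> by auto
    with deviation have "sqrt (L / 2 ^ (k + 1) * (A + c * k * ln 2))
        \<le> \<bar>(\<Sum>s\<in>{1..t}. Y s x) - t * \<mu>\<bar>"
      by linarith
    with x k(2) t(1) have "x \<in> Bad k"
      unfolding Bad_def by (auto intro!: bexI[of _ t])
    with k(1) show "x \<in> (\<Union>k\<in>{..nat \<lfloor>L\<rfloor>}. Bad k)"
      by blast
  qed
  then have "prob {x\<in>space M. \<exists>t::nat. 1 \<le> t \<and> t \<le> L \<and>
            sqrt (t * (A + c * ln (L / t))) < \<bar>(\<Sum>s\<in>{1..t}. Y s x) - t * \<mu>\<bar>}
        \<le> prob (\<Union>k\<in>{..nat \<lfloor>L\<rfloor>}. Bad k)"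
    using Bad_sets by (intro finite_measure_mono) auto
  also have "\<dots> \<le> (\<Sum>k\<in>{..nat \<lfloor>L\<rfloor>}. prob (Bad k))"
    using Bad_sets by (intro finite_measure_subadditive_finite) auto
  also have "\<dots> \<le> (\<Sum>k\<in>{..nat \<lfloor>L\<rfloor>}. 2 * exp (- A) * r ^ k)"
    unfolding Bad_def r_def using \<open>0 \<le> A\<close> \<open>0 < c\<close>
    by (intro sum_mono prob_dyadic_block_le[OF indep bounded mean]) auto
  also have "\<dots> = 2 * exp (- A) * (\<Sum>k\<in>{..nat \<lfloor>L\<rfloor>}. r ^ k)"
    by (simp add: sum_distrib_left)
  also have "(\<Sum>k\<in>{..nat \<lfloor>L\<rfloor>}. r ^ k) \<le> (\<Sum>k. r ^ k)"
    using \<open>0 < r\<close> \<open>r < 1\<close> by (intro sum_le_suminf summable_geometric) auto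
  also have "(\<Sum>k. r ^ k) = 1 / (1 - r)"
    using \<open>0 < r\<close> \<open>r < 1\<close> by (intro suminf_geometric) simp
  finally show ?thesis
    by (simp add: r_def)
qed

section \<open>The event \<open>\<M>\<^sub>i\<^sub>,\<^sub>\<kappa>\<close>\<close>

lemma sum_deviation_gt_of_gap_deviation:
  fixes S \<mu> \<theta> v :: real and t :: nat
  assumes "1 \<le> t" "sqrt (v / t) < \<bar>\<bar>S / t - \<theta>\<bar> - \<bar>\<mu> - \<theta>\<bar>\<bar>"
  shows "sqrt (t * v) < \<bar>S - t * \<mu>\<bar>"
proof -
  have "0 < real t" using assms(1) by simp
  have "sqrt (t * v) = sqrt ((real t)\<^sup>2 * (v / t))"
    using \<open>0 < real t\<close> by (simp add: power2_eq_square)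
  also have "\<dots> = t * sqrt (v / t)"
    by (simp only: real_sqrt_mult real_sqrt_abs abs_of_nat)
  also have "\<dots> < t * \<bar>\<bar>S / t - \<theta>\<bar> - \<bar>\<mu> - \<theta>\<bar>\<bar>"
    using assms(2) \<open>0 < real t\<close> by simp
  also have "\<dots> \<le> t * \<bar>S / t - \<mu>\<bar>"
    using \<open>0 < real t\<close> by (intro mult_left_mono) linarith+
  also have "\<dots> = \<bar>S - t * \<mu>\<bar>"
    using \<open>0 < real t\<close> by (simp add: abs_mult[symmetric] field_simps)
  finally show ?thesis .
qed

lemma peeling_constant_le:
  fixes \<alpha> A :: real
  assumes "0 < \<alpha>" "0 \<le> A"
  shows "2 * exp (- A) / (1 - 2 powr (- (1 / (4 * \<alpha>))))
           \<le> 4 * 2 powr (1 / (8 * \<alpha>)) / (2 powr (1 / (8 * \<alpha>)) - 1) * exp (- A / 2)"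
proof -
  define q where "q = 2 powr (1 / (8 * \<alpha>))"
  have "1 < q" using assms(1) by (simp add: q_def)
  have "q\<^sup>2 = 2 powr (1 / (4 * \<alpha>))"
    by (simp add: q_def power2_eq_square powr_add[symmetric])
  then have "2 * exp (- A) / (1 - 2 powr (- (1 / (4 * \<alpha>)))) = 2 * q\<^sup>2 / ((q - 1) * (q + 1)) * exp (- A)"
    using \<open>1 < q\<close> by (simp add: powr_minus_divide field_simps power2_eq_square)
  also have "\<dots> \<le> 4 * q * (q + 1) / ((q - 1) * (q + 1)) * exp (- A / 2)"
  proof (rule mult_mono)
    have "0 \<le> q * q" "0 \<le> q" using \<open>1 < q\<close> by auto
    then have "2 * q\<^sup>2 \<le> 4 * q * (q + 1)" by (simp add: power2_eq_square algebra_simps)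
    then show "2 * q\<^sup>2 / ((q - 1) * (q + 1)) \<le> 4 * q * (q + 1) / ((q - 1) * (q + 1))"
      using \<open>1 < q\<close> by (intro divide_right_mono) auto
  qed (use \<open>1 < q\<close> assms(2) in auto)
  also have "\<dots> = 4 * q / (q - 1) * exp (- A / 2)"
    using \<open>1 < q\<close> by simp
  finally show ?thesis
    unfolding q_def .
qed

lemma one_le_peeling_constant:
  fixes \<alpha> A :: real
  assumes "0 < \<alpha>" "A < 0"
  shows "1 \<le> 4 * 2 powr (1 / (8 * \<alpha>)) / (2 powr (1 / (8 * \<alpha>)) - 1) * exp (- A / 2)"
proof -
  have "1 < 2 powr (1 / (8 * \<alpha>))" using assms(1) by simp
  then have "1 \<le> 4 * 2 powr (1 / (8 * \<alpha>)) / (2 powr (1 / (8 * \<alpha>)) - 1)"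
    by (simp add: field_simps)
  moreover have "1 \<le> exp (- A / 2)"
    using assms(2) by simp
  ultimately show ?thesis
    using mult_mono[of 1 _ 1 "exp (- A / 2)"] by fastforce
qed

lemma (in prob_space) AE_mem_of_distr_prob_1:
  assumes "random_variable borel f" "measure (distr M borel f) S = 1" "S \<in> sets borel"
  shows "AE x in M. f x \<in> S"
proof -
  have "prob (f -` S \<inter> space M) = 1"
    using assms by (simp add: measure_distr)
  then have "AE x in M. x \<in> f -` S \<inter> space M"
    by (rule AE_prob_1)
  then show ?thesis by eventually_elim auto
qed

lemma Mevent_in_sets:
  assumes "\<And>s. X i s \<in> borel_measurable P"
  shows "Mevent P X \<alpha> D \<theta> K T i \<kappa> \<in> sets P"
proof -
  have [measurable]: "X i s \<in> borel_measurable P" for s by (fact assms)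
  have "Measurable.pred P (\<lambda>\<omega>. \<forall>t::nat. 1 \<le> t \<and> real t \<le> lam \<alpha> D \<theta> K T i \<longrightarrow>
        \<bar>emp_gap X \<theta> i t \<omega> - gap D \<theta> i\<bar>
          \<le> sqrt ((lam \<alpha> D \<theta> K T i * (gap D \<theta> i)\<^sup>2 / 5 - \<kappa> / 2
                   + 1 / (4 * \<alpha>) * ln (lam \<alpha> D \<theta> K T i / real t)) / real t))"
    unfolding emp_gap_def by (intro pred_intros_countable pred_intros_logic) measurable
  then show ?thesis
    unfolding Mevent_def by measurable
qed

lemma compl_Mevent_subset:
  fixes D :: "nat \<Rightarrow> real measure" and \<alpha> \<theta> T \<kappa> L A c :: real and K i :: nat
  defines "L \<equiv> lam \<alpha> D \<theta> K T i" and "A \<equiv> L * (gap D \<theta> i)\<^sup>2 / 5 - \<kappa> / 2" and "c \<equiv> 1 / (4 * \<alpha>)"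
  shows "space P - Mevent P X \<alpha> D \<theta> K T i \<kappa>
           \<subseteq> {x\<in>space P. \<exists>t::nat. 1 \<le> t \<and> t \<le> L \<and>
                sqrt (t * (A + c * ln (L / t))) < \<bar>(\<Sum>s\<in>{1..t}. X i s x) - t * arm_mean D i\<bar>}"
proof
  fix x assume "x \<in> space P - Mevent P X \<alpha> D \<theta> K T i \<kappa>"
  then obtain t :: nat where x: "x \<in> space P" and t: "1 \<le> t" "t \<le> L"
    and "sqrt ((A + c * ln (L / t)) / t) < \<bar>emp_gap X \<theta> i t x - gap D \<theta> i\<bar>"
    unfolding Mevent_def L_def A_def c_def by (auto simp: not_le)
  then have "sqrt (t * (A + c * ln (L / t))) < \<bar>(\<Sum>s\<in>{1..t}. X i s x) - t * arm_mean D i\<bar>"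
    by (intro sum_deviation_gt_of_gap_deviation) (auto simp: emp_gap_def gap_def)
  with x t show "x \<in> {x\<in>space P. \<exists>t::nat. 1 \<le> t \<and> t \<le> L \<and>
      sqrt (t * (A + c * ln (L / t))) < \<bar>(\<Sum>s\<in>{1..t}. X i s x) - t * arm_mean D i\<bar>}"
    by blast
qed

lemma (in prob_space) prob_compl_Mevent_le:
  assumes indep: "indep_vars (\<lambda>_. borel) (X i) UNIV"
    and bounded: "\<And>s. AE x in M. X i s x \<in> {0..1}"
    and mean: "\<And>s. expectation (X i s) = arm_mean D i"
    and "0 < \<alpha>"
  shows "prob (space M - Mevent M X \<alpha> D \<theta> K T i \<kappa>)
           \<le> 4 * 2 powr (1 / (8 * \<alpha>)) / (2 powr (1 / (8 * \<alpha>)) - 1)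
                 * exp (- lam \<alpha> D \<theta> K T i * (gap D \<theta> i)\<^sup>2 / 10 + \<kappa> / 4)"
proof -
  have [measurable]: "random_variable borel (X i s)" for s
    using indep_vars_measurable[OF indep] by simp
  define A where "A = lam \<alpha> D \<theta> K T i * (gap D \<theta> i)\<^sup>2 / 5 - \<kappa> / 2"
  have "- lam \<alpha> D \<theta> K T i * (gap D \<theta> i)\<^sup>2 / 10 + \<kappa> / 4 = - A / 2"
    by (simp add: A_def field_simps)
  moreover have "prob (space M - Mevent M X \<alpha> D \<theta> K T i \<kappa>)
      \<le> 4 * 2 powr (1 / (8 * \<alpha>)) / (2 powr (1 / (8 * \<alpha>)) - 1) * exp (- A / 2)"
  proof (cases "0 \<le> A")
    case True
    have "prob (space M - Mevent M X \<alpha> D \<theta> K T i \<kappa>)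
        \<le> prob {x\<in>space M. \<exists>t::nat. 1 \<le> t \<and> t \<le> lam \<alpha> D \<theta> K T i \<and>
              sqrt (t * (A + 1 / (4 * \<alpha>) * ln (lam \<alpha> D \<theta> K T i / t)))
                < \<bar>(\<Sum>s\<in>{1..t}. X i s x) - t * arm_mean D i\<bar>}"
      using compl_Mevent_subset unfolding A_def by (rule finite_measure_mono) measurable
    also have "\<dots> \<le> 2 * exp (- A) / (1 - 2 powr (- (1 / (4 * \<alpha>))))"
      using True \<open>0 < \<alpha>\<close> by (intro peeling_Hoeffding_ineq[OF indep bounded mean]) auto
    also have "\<dots> \<le> 4 * 2 powr (1 / (8 * \<alpha>)) / (2 powr (1 / (8 * \<alpha>)) - 1) * exp (- A / 2)"
      by (rule peeling_constant_le[OF \<open>0 < \<alpha>\<close> True])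
    finally show ?thesis .
  next
    case False
    then have "1 \<le> 4 * 2 powr (1 / (8 * \<alpha>)) / (2 powr (1 / (8 * \<alpha>)) - 1) * exp (- A / 2)"
      by (intro one_le_peeling_constant \<open>0 < \<alpha>\<close>) simp
    then show ?thesis
      using prob_le_1[of "space M - Mevent M X \<alpha> D \<theta> K T i \<kappa>"] by linarith
  qed
  ultimately show ?thesis
    by simp
qed

theorem lemma9:
  fixes P :: "'w measure"
    and X :: "nat \<Rightarrow> nat \<Rightarrow> 'w \<Rightarrow> real"
    and D :: "nat \<Rightarrow> real measure"
    and \<theta> \<alpha> T \<kappa> :: real
    and K i :: nat
  assumes "prob_space P"
    and "\<And>j s. j \<in> {1..K} \<Longrightarrow> X j s \<in> borel_measurable P"
    and "\<And>j. j \<in> {1..K} \<Longrightarrow> prob_space.indep_vars P (\<lambda>_. borel) (X j) UNIV"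
    and "\<And>j s. j \<in> {1..K} \<Longrightarrow> distr P borel (X j s) = D j"
    and "\<And>j. j \<in> {1..K} \<Longrightarrow> measure (D j) {0..1} = 1"
    and "0 < \<theta>" and "\<theta> < 1"
    and "0 < \<alpha>" and "\<alpha> \<le> 8"
    and "T \<ge> max (40 / \<alpha> + 1) 40 * real K"
    and "i \<in> Bset \<alpha> D \<theta> K T"
  shows "measure P (Mevent P X \<alpha> D \<theta> K T i \<kappa>)
           \<ge> 1 - 4 * 2 powr (1 / (8 * \<alpha>)) / (2 powr (1 / (8 * \<alpha>)) - 1)
                 * exp (- lam \<alpha> D \<theta> K T i * (gap D \<theta> i)\<^sup>2 / 10 + \<kappa> / 4)"
proof -
  interpret prob_space P by fact
  have "i \<in> {1..K}" using assms(11) by (simp add: Bset_def)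
  have X_meas [measurable]: "X i s \<in> borel_measurable P" for s
    using assms(2) \<open>i \<in> {1..K}\<close> .
  have bounded: "AE x in P. X i s x \<in> {0..1}" for s
    using AE_mem_of_distr_prob_1[of "X i s" "{0..1}"] assms(4,5) \<open>i \<in> {1..K}\<close> by simp
  have mean: "expectation (X i s) = arm_mean D i" for s
    using integral_distr[OF X_meas[of s], of "\<lambda>x. x"] assms(4) \<open>i \<in> {1..K}\<close> by (simp add: arm_mean_def)
  have "prob (space P - Mevent P X \<alpha> D \<theta> K T i \<kappa>)
      \<le> 4 * 2 powr (1 / (8 * \<alpha>)) / (2 powr (1 / (8 * \<alpha>)) - 1)
            * exp (- lam \<alpha> D \<theta> K T i * (gap D \<theta> i)\<^sup>2 / 10 + \<kappa> / 4)"
    by (rule prob_compl_Mevent_le[of X i, OF assms(3)[OF \<open>i \<in> {1..K}\<close>] bounded mean assms(8)])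
  then show ?thesis
    using prob_compl[OF Mevent_in_sets[of X i P, OF X_meas]] by simp
qed

end
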